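(* Let $0<\alpha\le 2\pi/3$ and let $u,v\in V$ with $\{u,v\}\in E$. Then either $(u,v)\in N_\alpha$, or there is a sequence $u_0,\dots,u_m$ with $u_0=u$, $u_m=v$, and for all $i=0,\dots,m-1$: $(u_i,u_{i+1})\in N_\alpha$ and $d(u_i,u_{i+1})<d(u,v)$.
   Context: Let $V$ be a finite set of pairwise distinct points (nodes) in the Euclidean plane, $d$ the Euclidean distance, and $R>0$. Let $G_R=(V,E)$ be the undirected graph with $E=\{\{u,v\}: u\neq v,\ d(u,v)\le R\}$. Fix a finite increasing sequence of radius levels $0<r_1<r_2<\dots<r_k=R$. For $u\in V$ and $1\le i\le k$ let $S_i(u)=\{v\in V\setminus\{u\}: d(u,v)\le r_i\}$. For $0<\alpha<2\pi$, a closed cone of width $\alpha$ with apex $u$ is a set $\{u+t(\cos\varphi,\sin\varphi): t\ge 0,\ \varphi\in[\theta-\alpha/2,\theta+\alpha/2]\}$ for some $\theta$. A finite set $S\subseteq V\setminus\{u\}$ has an $\alpha$-gap (at $u$) if some closed cone of width $\alpha$ with apex $u$ contains no node of $S$ (in particular $\emptyset$ has an $\alpha$-gap). The algorithm CBTC($\alpha$) assigns to each $u$ the index $i_u$ = the least $i\in\{1,\dots,k\}$ such that $S_i(u)$ has no $\alpha$-gap, or $i_u=k$ if there is no such $i$; set $N_\alpha(u)=S_{i_u}(u)$ and $N_\alpha=\{(u,v): v\in N_\alpha(u)\}$ (a directed relation, not necessarily symmetric). *)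

theory Defs
  imports "HOL-Analysis.Analysis"
begin

text \<open>The Euclidean plane is modelled by the type complex; dist is the Euclidean distance.
  Radius levels are r 1 < ... < r k (indices 1..k).\<close>

definition S_level :: "complex set \<Rightarrow> (nat \<Rightarrow> real) \<Rightarrow> nat \<Rightarrow> complex \<Rightarrow> complex set" where
  "S_level V r i u = {v \<in> V - {u}. dist u v \<le> r i}"

definition cone :: "complex \<Rightarrow> real \<Rightarrow> real \<Rightarrow> complex set" where
  "cone u \<theta> \<alpha> = {u + complex_of_real t * cis \<phi> | t \<phi>.
      t \<ge> 0 \<and> \<theta> - \<alpha>/2 \<le> \<phi> \<and> \<phi> \<le> \<theta> + \<alpha>/2}"

definition has_gap :: "real \<Rightarrow> complex \<Rightarrow> complex set \<Rightarrow> bool" where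
  "has_gap \<alpha> u S \<longleftrightarrow> (\<exists>\<theta>. cone u \<theta> \<alpha> \<inter> S = {})"

definition cbtc_index :: "complex set \<Rightarrow> (nat \<Rightarrow> real) \<Rightarrow> nat \<Rightarrow> real \<Rightarrow> complex \<Rightarrow> nat" where
  "cbtc_index V r k \<alpha> u =
     (if \<exists>i\<in>{1..k}. \<not> has_gap \<alpha> u (S_level V r i u)
      then (LEAST i. i \<in> {1..k} \<and> \<not> has_gap \<alpha> u (S_level V r i u))
      else k)"

definition N_cbtc :: "complex set \<Rightarrow> (nat \<Rightarrow> real) \<Rightarrow> nat \<Rightarrow> real \<Rightarrow> (complex \<times> complex) set" where
  "N_cbtc V r k \<alpha> = {(u, v). u \<in> V \<and> v \<in> S_level V r (cbtc_index V r k \<alpha> u) u}"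

end

theory Submission
  imports Defs
begin

text \<open>If the edge \<open>(u, v)\<close> is not kept, the level chosen at \<open>u\<close> has no \<open>\<alpha>\<close>-gap but does not
  reach \<open>v\<close>; so the cone of width \<open>\<alpha>\<close> around the direction of \<open>v\<close> contains a neighbour \<open>w\<close>
  strictly closer to \<open>u\<close> than \<open>v\<close>. As \<open>\<alpha> \<le> 2\<pi>/3\<close>, the angle \<open>wuv\<close> is at most \<open>\<pi>/3\<close>, which
  forces \<open>d(w, v) < d(u, v)\<close>. Iterating from \<open>w\<close> (induction on the length of the edge, of
  which there are finitely many) yields a path of kept edges, all shorter than \<open>d(u, v)\<close>.\<close>

lemma norm_polar_diff_squared:
  fixes t c \<phi> \<theta> :: real
  shows "(norm (complex_of_real t * cis \<phi> - complex_of_real c * cis \<theta>))\<^sup>2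
    = t\<^sup>2 + c\<^sup>2 - 2 * t * c * cos (\<phi> - \<theta>)"
proof -
  have "(norm (complex_of_real t * cis \<phi> - complex_of_real c * cis \<theta>))\<^sup>2
      = (t * cos \<phi> - c * cos \<theta>)\<^sup>2 + (t * sin \<phi> - c * sin \<theta>)\<^sup>2"
    by (simp add: cmod_def)
  also have "\<dots> = t\<^sup>2 * ((sin \<phi>)\<^sup>2 + (cos \<phi>)\<^sup>2) + c\<^sup>2 * ((sin \<theta>)\<^sup>2 + (cos \<theta>)\<^sup>2)
      - 2 * t * c * (cos \<phi> * cos \<theta> + sin \<phi> * sin \<theta>)"
    by algebra
  also have "\<dots> = t\<^sup>2 + c\<^sup>2 - 2 * t * c * cos (\<phi> - \<theta>)"
    by (simp add: cos_diff)
  finally show ?thesis .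
qed

lemma norm_polar_diff_less:
  fixes t c \<phi> \<theta> :: real
  assumes "0 < t" "t < c" "\<bar>\<phi> - \<theta>\<bar> \<le> pi / 3"
  shows "norm (complex_of_real t * cis \<phi> - complex_of_real c * cis \<theta>) < c"
proof -
  have "cos (pi / 3) \<le> cos \<bar>\<phi> - \<theta>\<bar>"
    using assms(3) by (intro cos_monotone_0_pi_le) auto
  then have "1 / 2 \<le> cos (\<phi> - \<theta>)"
    by (simp add: cos_60 cos_abs_real)
  then have "t * c \<le> 2 * t * c * cos (\<phi> - \<theta>)"
    using assms(1,2) mult_left_mono[of "1/2" "cos (\<phi> - \<theta>)" "2 * t * c"] by simp
  moreover have "t\<^sup>2 < t * c"
    using assms(1,2) by (simp add: power2_eq_square)
  ultimately have "(norm (complex_of_real t * cis \<phi> - complex_of_real c * cis \<theta>))\<^sup>2 < c\<^sup>2"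
    unfolding norm_polar_diff_squared by linarith
  then show ?thesis
    using assms(1,2) by (simp add: power2_less_imp_less)
qed

lemma cone_point_closer:
  assumes "\<alpha> \<le> 2 * pi / 3" and "w \<in> cone u (Arg (v - u)) \<alpha>"
    and "w \<noteq> u" and "dist u w < dist u v"
  shows "dist w v < dist u v"
proof -
  obtain t \<phi> where w: "w = u + complex_of_real t * cis \<phi>" and "t \<ge> 0"
    and "Arg (v - u) - \<alpha> / 2 \<le> \<phi>" and "\<phi> \<le> Arg (v - u) + \<alpha> / 2"
    using assms(2) unfolding cone_def by blast
  with assms(1) have \<phi>: "\<bar>\<phi> - Arg (v - u)\<bar> \<le> pi / 3"
    by linarith
  have "dist u w = t"
    using w \<open>t \<ge> 0\<close> by (simp add: dist_norm norm_mult)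
  with assms(3) \<open>t \<ge> 0\<close> have "0 < t"
    by auto
  have "v - u = complex_of_real (dist u v) * cis (Arg (v - u))"
    by (metis rcis_cmod_Arg rcis_def dist_commute dist_norm)
  then have "w - v = complex_of_real t * cis \<phi> - complex_of_real (dist u v) * cis (Arg (v - u))"
    using w by (simp add: algebra_simps)
  then show ?thesis
    using norm_polar_diff_less[OF \<open>0 < t\<close> _ \<phi>] assms(4) \<open>dist u w = t\<close> by (simp add: dist_norm)
qed

lemma no_gap_at_cbtc_index:
  assumes "(u, v) \<notin> N_cbtc V r k \<alpha>" and "u \<in> V" and "v \<in> S_level V r k u"
  shows "\<not> has_gap \<alpha> u (S_level V r (cbtc_index V r k \<alpha> u) u)"
proof (cases "\<exists>i\<in>{1..k}. \<not> has_gap \<alpha> u (S_level V r i u)")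
  case True
  then have "\<exists>i. i \<in> {1..k} \<and> \<not> has_gap \<alpha> u (S_level V r i u)"
    by blast
  from LeastI_ex[OF this] True show ?thesis
    unfolding cbtc_index_def by simp
next
  case False
  then have "cbtc_index V r k \<alpha> u = k"
    by (simp add: cbtc_index_def)
  with assms show ?thesis
    by (simp add: N_cbtc_def)
qed

lemma N_cbtc_detour:
  assumes "\<alpha> \<le> 2 * pi / 3" and "u \<in> V" and "v \<in> V" and "u \<noteq> v" and "dist u v \<le> r k"
    and "(u, v) \<notin> N_cbtc V r k \<alpha>"
  shows "\<exists>w\<in>V. (u, w) \<in> N_cbtc V r k \<alpha> \<and> dist u w < dist u v \<and> dist w v < dist u v"
proof -
  define S where "S = S_level V r (cbtc_index V r k \<alpha> u) u"
  have "v \<in> S_level V r k u"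
    using assms(3-5) by (simp add: S_level_def)
  with assms(2,6) have "\<not> has_gap \<alpha> u S"
    unfolding S_def by (intro no_gap_at_cbtc_index)
  then obtain w where cone: "w \<in> cone u (Arg (v - u)) \<alpha>" and "w \<in> S"
    unfolding has_gap_def by blast
  have "v \<notin> S"
    using assms(2,6) by (simp add: S_def N_cbtc_def)
  with \<open>w \<in> S\<close> assms(3,4) have "w \<in> V" "w \<noteq> u" "dist u w < dist u v"
    by (auto simp: S_def S_level_def)
  moreover have "(u, w) \<in> N_cbtc V r k \<alpha>"
    using \<open>w \<in> S\<close> assms(2) by (simp add: S_def N_cbtc_def)
  ultimately show ?thesis
    using cone_point_closer[OF assms(1) cone] by blast
qed

lemma card_shorter_pairs_less:
  fixes V :: "'a::metric_space set"
  assumes "finite V" and "w \<in> V" and "b \<in> V" and "dist w b < dist a b"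
  shows "card {p \<in> V \<times> V. dist (fst p) (snd p) < dist w b}
    < card {p \<in> V \<times> V. dist (fst p) (snd p) < dist a b}"
proof (rule psubset_card_mono)
  show "finite {p \<in> V \<times> V. dist (fst p) (snd p) < dist a b}"
    using assms(1) by simp
  show "{p \<in> V \<times> V. dist (fst p) (snd p) < dist w b}
    \<subset> {p \<in> V \<times> V. dist (fst p) (snd p) < dist a b}"
    using assms(2-4) by force
qed

lemma kept_or_shorter_path:
  fixes V :: "'a::metric_space set" and N :: "('a \<times> 'a) set"
  assumes "finite V"
    and detour: "\<And>a b. a \<in> V \<Longrightarrow> b \<in> V \<Longrightarrow> a \<noteq> b \<Longrightarrow> dist a b \<le> R \<Longrightarrow> (a, b) \<notin> N \<Longrightarrow>
      \<exists>w\<in>V. (a, w) \<in> N \<and> dist a w < dist a b \<and> dist w b < dist a b"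
    and "a \<in> V" and "b \<in> V" and "dist a b \<le> R"
  shows "(a, b) \<in> N \<or> (a, b) \<in> {(x, y) \<in> N. dist x y < dist a b}\<^sup>*"
  using assms(3-5)
proof (induction "card {p \<in> V \<times> V. dist (fst p) (snd p) < dist a b}" arbitrary: a rule: less_induct)
  case less
  show ?case
  proof (cases "(a, b) \<in> N \<or> a = b")
    case False
    with less.prems obtain w where w: "w \<in> V" "(a, w) \<in> N" "dist a w < dist a b" "dist w b < dist a b"
      using detour by blast
    have "(w, b) \<in> N \<or> (w, b) \<in> {(x, y) \<in> N. dist x y < dist w b}\<^sup>*"
      using less.hyps[OF card_shorter_pairs_less] assms(1) w(1,4) less.prems by force
    moreover have "{(x, y) \<in> N. dist x y < dist w b} \<subseteq> {(x, y) \<in> N. dist x y < dist a b}"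
      using w(4) by auto
    ultimately have "(w, b) \<in> {(x, y) \<in> N. dist x y < dist a b}\<^sup>*"
      using w(4) rtrancl_mono by blast
    with w(2,3) show ?thesis
      by (auto intro: converse_rtrancl_into_rtrancl)
  qed auto
qed

theorem lemma2:
  fixes V :: "complex set" and r :: "nat \<Rightarrow> real" and k :: nat and R \<alpha> :: real
    and u v :: complex
  assumes "finite V" and "R > 0"
    and "k \<ge> 1" and "0 < r 1" and "\<And>i j. 1 \<le> i \<Longrightarrow> i < j \<Longrightarrow> j \<le> k \<Longrightarrow> r i < r j"
    and "r k = R"
    and "0 < \<alpha>" and "\<alpha> \<le> 2 * pi / 3"
    and "u \<in> V" and "v \<in> V" and "u \<noteq> v" and "dist u v \<le> R"
  shows "(u, v) \<in> N_cbtc V r k \<alpha> \<or>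
    (\<exists>(us :: nat \<Rightarrow> complex) m. us 0 = u \<and> us m = v \<and>
       (\<forall>i<m. (us i, us (Suc i)) \<in> N_cbtc V r k \<alpha> \<and> dist (us i) (us (Suc i)) < dist u v))"
proof -
  have "(u, v) \<in> N_cbtc V r k \<alpha> \<or>
      (u, v) \<in> {(x, y) \<in> N_cbtc V r k \<alpha>. dist x y < dist u v}\<^sup>*"
    using kept_or_shorter_path[OF assms(1) N_cbtc_detour] assms(6,8-10,12) by blast
  then show ?thesis
    unfolding rtrancl_power relpow_fun_conv by auto
qed

end
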